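(* Assume the setting below. Let $k_n\in\mathbb R_{\ge1}$, let $\mho$ be an arbitrary event with complement $\mho^c$, and let $\mathfrak A:=\{\sigma_Y^2\le2\widehat\sigma_Y^2\}$ with complement $\mathfrak A^c$. Let $$\hat k\in\operatorname*{argmin}_{k\in\{1,\dots,\lfloor k_n\rfloor\}}\Big\{-\|\widehat{\mathcal M}_X^k\|^2_{\mathbb L^2(\mathrm v)}+2\widehat\sigma_Y^2\operatorname{pen}_k^{\widehat{\mathrm v}}\Big\}.$$ Then for every $k_\circ\in\{1,\dots,\lfloor k_n\rfloor\}$, almost surely, $$\begin{aligned}\|\widehat{\mathcal M}_X^{\hat k}-\mathcal M_X\|^2_{\mathbb L^2(\mathrm v)}\le{}&15\|\mathbb 1_{[-k_\circ,k_\circ]}(\widehat{\mathcal M}_Y-\mathcal M_Y)\widehat{\mathcal M}_U^\dagger\mathbb 1_{\mathfrak M}\|^2_{\mathbb L^2(\mathrm v)}+15\|\mathbb 1_{[-k_\circ,k_\circ]^C}\mathcal M_X\|^2_{\mathbb L^2(\mathrm v)}+24\widehat\sigma_Y^2\operatorname{pen}^{\widehat{\mathrm v}}_{k_\circ}\mathbb 1_{\mho}+6\|\mathcal M_X\|^2_{\mathbb L^2(\mathrm v)}\mathbb 1_{\mho^c}\\ &+15\|(\mathcal M_U\widehat{\mathcal M}_U^\dagger\mathbb 1_{\mathfrak M}-1)\mathcal M_X\mathbb 1_{[-k_n,k_n]}\|^2_{\mathbb L^2(\mathrm v)}\\ &+12\max_{k\in\{1,\dots,\lfloor k_n\rfloor\}}\Big(\|\mathbb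 1_{[-k,k]}(\widehat{\mathcal M}_Y-\mathcal M_Y)\widehat{\mathcal M}_U^\dagger\mathbb 1_{\mathfrak M}\|^2_{\mathbb L^2(\mathrm v)}-\tfrac{\sigma_Y^2}{4}\operatorname{pen}_k^{\widehat{\mathrm v}}\Big)_+\\ &+3\|\mathbb 1_{[-k_n,k_n]}(\widehat{\mathcal M}_Y-\mathcal M_Y)\widehat{\mathcal M}_U^\dagger\mathbb 1_{\mathfrak M}\|^2_{\mathbb L^2(\mathrm v)}(\mathbb 1_{\mho^c}+\mathbb 1_{\mathfrak A^c}).\end{aligned}$$
   Context: Fix $c\in\mathbb R$. $X,U$ are independent $\mathbb R_{>0}$-valued random variables with densities $f,f^U$ with $f\in\mathbb L^2_+(\mathrm x^{2c-1})$, $f^U\in\mathbb L^1_+(\mathrm x^{c-1})\cap\mathbb L^2_+(\mathrm x^{2c-1})$, $\mathbb E[Y^{2(c-1)}]<\infty$, where $Y:=XU$ with density $f^Y$. $Y_1,\dots,Y_n$ are i.i.d. copies of $Y$; $U_1,\dots,U_m$ are i.i.d. copies of $U$ independent of the $Y_i$. $\mathbb L^p_+(\mathrm w)$, $\mathbb L^p(\mathrm w)$ are $L^p$ spaces on $\mathbb R_{>0}$, resp. $\mathbb R$, w.r.t. $\mathrm w\,d\lambda$, with the convention $\|h\|_{\mathbb L^\infty(\mathrm w)}:=\operatorname{ess\,sup}|h|\mathrm w$; $\mathrm x^a$ is the weight $x\mapsto x^a$. $\mathcal M_Y,\mathcal M_X,\mathcal M_U$ are the Mellin transforms $\operatorname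 M_c[h](t)=\int_0^\infty x^{c-1+\iota2\pi t}h(x)dx$ of $f^Y,f,f^U$. For $w:\mathbb R\to\mathbb C$, $w^\dagger:=1/w$ where $w\ne0$, $0$ elsewhere. $\widehat{\mathcal M}_Y(t):=\frac1n\sum_iY_i^{c-1+\iota2\pi t}$, $\widehat{\mathcal M}_U(t):=\frac1m\sum_jU_j^{c-1+\iota2\pi t}$, $\sigma_Y^2:=1+\mathbb E[Y_1^{2(c-1)}]$, $\widehat\sigma_Y^2:=1+\frac1n\sum_iY_i^{2(c-1)}$, $\mathfrak M:=\{t:(m\wedge n)|\widehat{\mathcal M}_U(t)|^2\ge1\}$, $\widehat{\mathcal M}_X:=\widehat{\mathcal M}_Y\widehat{\mathcal M}_U^\dagger\mathbb 1_{\mathfrak M}$, $\widehat{\mathcal M}_X^k:=\widehat{\mathcal M}_X\mathbb 1_{[-k,k]}$. $\mathrm v:\mathbb R\to[0,\infty)$ is a measurable weight with $\mathbb 1_{[-k,k]}\in\mathbb L^\infty(\mathrm v)$ for all $k>0$, and $\widehat{\mathrm v}:=|\widehat{\mathcal M}_U^\dagger\mathbb 1_{\mathfrak M}|^2\mathrm v$ (a random weight). For a weight $\mathrm w$ and $k\ge1$: $\Delta_k^{\mathrm w}:=\|\mathbb 1_{[-k,k]}\|_{\mathbb L^\infty(\mathrm w)}$, $\delta_k^{\mathrm w}:=\log(\Delta_k^{\mathrm w}\vee(k+2))/\log(k+2)$. The penalty is $\operatorname{pen}_k^{\widehat{\mathrm v}}:=24\,\Delta_k^{\widehat{\mathrm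 v}}\delta_k^{\widehat{\mathrm v}}\,k\,n^{-1}$. $a_+:=\max\{a,0\}$. *)

theory Defs
  imports "HOL-Probability.Probability"
begin

text \<open>x^(c-1+i 2 pi t) for x > 0\<close>
definition mpow :: "real \<Rightarrow> real \<Rightarrow> real \<Rightarrow> complex" where
  "mpow c x t = complex_of_real (x powr (c - 1)) * cis (2 * pi * t * ln x)"

definition mellin :: "real \<Rightarrow> (real \<Rightarrow> real) \<Rightarrow> real \<Rightarrow> complex" where
  "mellin c h t = (LINT x|lborel. indicator {0<..} x *\<^sub>R (complex_of_real (h x) * mpow c x t))"

definition mellin_trunc :: "real \<Rightarrow> (real \<Rightarrow> real) \<Rightarrow> real \<Rightarrow> real \<Rightarrow> complex" where
  "mellin_trunc c h R t = (LINT x|lborel. indicator {1/R..R} x *\<^sub>R (complex_of_real (h x) * mpow c x t))"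

text \<open>g is (a representative of) the L^2 (Plancherel) Mellin transform of h:
  the truncated Mellin integrals converge to g in L^2(dt).\<close>
definition is_mellin_L2 :: "real \<Rightarrow> (real \<Rightarrow> real) \<Rightarrow> (real \<Rightarrow> complex) \<Rightarrow> bool" where
  "is_mellin_L2 c h g \<longleftrightarrow> g \<in> borel_measurable borel \<and>
     ((\<lambda>R. \<integral>\<^sup>+ t. ennreal ((cmod (g t - mellin_trunc c h R t))\<^sup>2) \<partial>lborel) \<longlongrightarrow> 0) at_top"

definition dagger :: "(real \<Rightarrow> complex) \<Rightarrow> real \<Rightarrow> complex" where
  "dagger w t = (if w t = 0 then 0 else 1 / w t)"

definition L2sq :: "(real \<Rightarrow> real) \<Rightarrow> (real \<Rightarrow> complex) \<Rightarrow> ennreal" where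
  "L2sq w h = (\<integral>\<^sup>+ t. ennreal ((cmod (h t))\<^sup>2 * w t) \<partial>lborel)"

definition Delta :: "(real \<Rightarrow> real) \<Rightarrow> real \<Rightarrow> real" where
  "Delta w k = real_of_ereal (esssup lborel (\<lambda>t. ereal (indicator {-k..k} t * w t)))"

definition delta :: "(real \<Rightarrow> real) \<Rightarrow> real \<Rightarrow> real" where
  "delta w k = ln (max (Delta w k) (k + 2)) / ln (k + 2)"

definition pen :: "nat \<Rightarrow> (real \<Rightarrow> real) \<Rightarrow> real \<Rightarrow> real" where
  "pen n w k = 24 * Delta w k * delta w k * k / real n"

definition emp_mellin :: "real \<Rightarrow> nat \<Rightarrow> (nat \<Rightarrow> 'a \<Rightarrow> real) \<Rightarrow> 'a \<Rightarrow> real \<Rightarrow> complex" where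
  "emp_mellin c N Z \<omega> t = (\<Sum>i<N. mpow c (Z i \<omega>) t) / of_nat N"

definition Mset :: "real \<Rightarrow> nat \<Rightarrow> nat \<Rightarrow> (nat \<Rightarrow> 'a \<Rightarrow> real) \<Rightarrow> 'a \<Rightarrow> real set" where
  "Mset c n m Us \<omega> = {t. real (min m n) * (cmod (emp_mellin c m Us \<omega> t))\<^sup>2 \<ge> 1}"

definition MUinv :: "real \<Rightarrow> nat \<Rightarrow> nat \<Rightarrow> (nat \<Rightarrow> 'a \<Rightarrow> real) \<Rightarrow> 'a \<Rightarrow> real \<Rightarrow> complex" where
  "MUinv c n m Us \<omega> t = dagger (emp_mellin c m Us \<omega>) t * indicator (Mset c n m Us \<omega>) t"

definition MXhat :: "real \<Rightarrow> nat \<Rightarrow> nat \<Rightarrow> (nat \<Rightarrow> 'a \<Rightarrow> real) \<Rightarrow> (nat \<Rightarrow> 'a \<Rightarrow> real) \<Rightarrow> 'a \<Rightarrow> real \<Rightarrow> complex" where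
  "MXhat c n m Ys Us \<omega> t = emp_mellin c n Ys \<omega> t * MUinv c n m Us \<omega> t"

definition MXhatk :: "real \<Rightarrow> nat \<Rightarrow> nat \<Rightarrow> (nat \<Rightarrow> 'a \<Rightarrow> real) \<Rightarrow> (nat \<Rightarrow> 'a \<Rightarrow> real) \<Rightarrow> real \<Rightarrow> 'a \<Rightarrow> real \<Rightarrow> complex" where
  "MXhatk c n m Ys Us k \<omega> t = MXhat c n m Ys Us \<omega> t * indicator {-k..k} t"

definition vhat :: "real \<Rightarrow> nat \<Rightarrow> nat \<Rightarrow> (nat \<Rightarrow> 'a \<Rightarrow> real) \<Rightarrow> (real \<Rightarrow> real) \<Rightarrow> 'a \<Rightarrow> real \<Rightarrow> real" where
  "vhat c n m Us v \<omega> t = (cmod (MUinv c n m Us \<omega> t))\<^sup>2 * v t"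

definition sigmahat2 :: "real \<Rightarrow> nat \<Rightarrow> (nat \<Rightarrow> 'a \<Rightarrow> real) \<Rightarrow> 'a \<Rightarrow> real" where
  "sigmahat2 c n Ys \<omega> = 1 + (\<Sum>i<n. Ys i \<omega> powr (2 * (c - 1))) / real n"

end

theory Submission
  imports Defs
begin

(*
  Two population facts make the estimation error explicit: independence gives M_Y = M_X M_U, and
  the moment condition on Y = XU makes the Mellin integral of f absolutely convergent, so that the
  L2-Mellin transform M_X agrees with it almost everywhere.  Hence, pointwise,
  Mhat_Y Mhat_U^dagger 1_M - M_X = (Mhat_Y - M_Y) Mhat_U^dagger 1_M + (M_U Mhat_U^dagger 1_M - 1) M_X.
  The rest is deterministic and compares the selected khat with k0.  If khat >= k0, the
  minimality of khat bounds the energy of Mhat_X on the band k0 < |t| <= khat from below by the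
  penalty increment, and on the event sigma_Y^2 <= 2 sigmahat_Y^2 the deviation on [-khat, khat]
  exceeds sigma_Y^2/4 pen_khat at most by the maximum term, so the penalty at khat cancels and
  only the one at k0 remains.  If khat < k0, the same minimality bounds the band energy by the
  penalty at k0.  Outside these events a crude bound by the deviation on [-kn, kn] suffices.
*)

lemma norm_add_sq_le:
  fixes x y :: "'a::real_normed_vector" and \<tau> :: real
  assumes "0 < \<tau>"
  shows "(norm (x + y))\<^sup>2 \<le> (1 + \<tau>) * (norm x)\<^sup>2 + (1 + 1 / \<tau>) * (norm y)\<^sup>2"
proof -
  have "2 * \<tau> * (norm x * norm y) \<le> \<tau>\<^sup>2 * (norm x)\<^sup>2 + (norm y)\<^sup>2"
    using zero_le_power2[of "\<tau> * norm x - norm y"]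
    by (simp add: power2_diff power_mult_distrib)
  then have "2 * (norm x * norm y) \<le> \<tau> * (norm x)\<^sup>2 + (norm y)\<^sup>2 / \<tau>"
    using assms by (simp add: field_simps power2_eq_square)
  moreover have "(norm (x + y))\<^sup>2 \<le> (norm x + norm y)\<^sup>2"
    by (simp add: norm_triangle_ineq power_mono)
  ultimately show ?thesis
    by (simp add: power2_sum field_simps)
qed

lemma truncation_error_crude:
  fixes z a e r :: "'a::real_normed_vector"
  assumes "z - a = e + r" "A \<subseteq> C"
  shows "(norm (indicator A t *\<^sub>R z - a))\<^sup>2
    \<le> 2 * (norm (indicator C t *\<^sub>R e))\<^sup>2 + 2 * (norm (indicator C t *\<^sub>R r))\<^sup>2
      + (norm (indicator (- A) t *\<^sub>R a))\<^sup>2"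
proof -
  have "(norm (z - a))\<^sup>2 \<le> 2 * (norm e)\<^sup>2 + 2 * (norm r)\<^sup>2"
    using norm_add_sq_le[of 1 e r] assms(1) by simp
  then show ?thesis
    using assms(2) by (cases "t \<in> A"; cases "t \<in> C") (auto simp: indicator_def)
qed

(* The deviation term gets the factor 4 = 3 * (1 + 1/3): four times sigma_Y^2/4 pen is exactly
   what the penalty 2 sigmahat_Y^2 pen can absorb on the event sigma_Y^2 <= 2 sigmahat_Y^2. *)
lemma truncation_error_above:
  fixes z a e r :: "'a::real_normed_vector"
  assumes "z - a = e + r" "A \<subseteq> B" "B \<subseteq> C"
  shows "(norm (indicator B t *\<^sub>R z - a))\<^sup>2 + (norm (indicator (B - A) t *\<^sub>R z))\<^sup>2
    \<le> 4 * (norm (indicator B t *\<^sub>R e))\<^sup>2 + 12 * (norm (indicator C t *\<^sub>R r))\<^sup>2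
      + 2 * (norm (indicator (- A) t *\<^sub>R a))\<^sup>2"
proof -
  have "(norm (z - a))\<^sup>2 \<le> (1 + \<tau>) * (norm e)\<^sup>2 + (1 + 1 / \<tau>) * (norm r)\<^sup>2" if "0 < \<tau>" for \<tau>
    using norm_add_sq_le[OF that, of e r] assms(1) by simp
  from this[of 1] this[of "1/3"]
  have za: "(norm (z - a))\<^sup>2 \<le> 2 * (norm e)\<^sup>2 + 2 * (norm r)\<^sup>2"
    "3 * (norm (z - a))\<^sup>2 \<le> 4 * (norm e)\<^sup>2 + 12 * (norm r)\<^sup>2"
    by simp_all
  have z: "(norm z)\<^sup>2 \<le> 2 * (norm (z - a))\<^sup>2 + 2 * (norm a)\<^sup>2"
    using norm_add_sq_le[of 1 "z - a" a] by simp
  consider "t \<in> A" | "t \<in> B - A" | "t \<notin> B"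
    by blast
  then show ?thesis
    using za z assms(2,3)
    by (cases; auto simp: indicator_def; use zero_le_power2[of "norm e"] zero_le_power2[of "norm r"] in linarith)
qed

lemma truncation_error_below:
  fixes z a e r :: "'a::real_normed_vector"
  assumes "z - a = e + r" "A \<subseteq> B" "B \<subseteq> C"
  shows "(norm (indicator A t *\<^sub>R z - a))\<^sup>2
    \<le> 4 * (norm (indicator B t *\<^sub>R e))\<^sup>2 + 4 * (norm (indicator C t *\<^sub>R r))\<^sup>2
      + (norm (indicator (- B) t *\<^sub>R a))\<^sup>2 + 2 * (norm (indicator (B - A) t *\<^sub>R z))\<^sup>2"
proof -
  have za: "(norm (z - a))\<^sup>2 \<le> 2 * (norm e)\<^sup>2 + 2 * (norm r)\<^sup>2"
    using norm_add_sq_le[of 1 e r] assms(1) by simp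
  have a: "(norm a)\<^sup>2 \<le> 2 * (norm z)\<^sup>2 + 2 * (norm (z - a))\<^sup>2"
    using norm_add_sq_le[of 1 z "a - z"] by (simp add: norm_minus_commute)
  consider "t \<in> A" | "t \<in> B - A" | "t \<notin> B"
    by blast
  then show ?thesis
    using za a assms(2,3)
    by (cases; auto simp: indicator_def; use zero_le_power2[of "norm e"] zero_le_power2[of "norm r"] in linarith)
qed

lemma nn_integral_le_lincomb:
  fixes f g1 g2 g3 g4 :: "'a \<Rightarrow> real"
  assumes le: "AE x in M. f x \<le> c1 * g1 x + c2 * g2 x + c3 * g3 x + c4 * g4 x"
    and c: "0 \<le> c1" "0 \<le> c2" "0 \<le> c3" "0 \<le> c4"
    and g: "\<And>x. 0 \<le> g1 x" "\<And>x. 0 \<le> g2 x" "\<And>x. 0 \<le> g3 x" "\<And>x. 0 \<le> g4 x"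
    and [measurable]: "g1 \<in> borel_measurable M" "g2 \<in> borel_measurable M"
      "g3 \<in> borel_measurable M" "g4 \<in> borel_measurable M"
  shows "(\<integral>\<^sup>+x. f x \<partial>M) \<le> ennreal c1 * (\<integral>\<^sup>+x. g1 x \<partial>M) + ennreal c2 * (\<integral>\<^sup>+x. g2 x \<partial>M)
           + ennreal c3 * (\<integral>\<^sup>+x. g3 x \<partial>M) + ennreal c4 * (\<integral>\<^sup>+x. g4 x \<partial>M)"
proof -
  have "AE x in M. ennreal (f x)
      \<le> ennreal c1 * g1 x + ennreal c2 * g2 x + ennreal c3 * g3 x + ennreal c4 * g4 x"
    using le
  proof eventually_elim
    case (elim x)
    then have "ennreal (f x) \<le> ennreal (c1 * g1 x + c2 * g2 x + c3 * g3 x + c4 * g4 x)"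
      by (rule ennreal_leI)
    then show ?case
      using c g by (simp add: ennreal_plus[symmetric] ennreal_mult[symmetric] del: ennreal_plus)
  qed
  then have "(\<integral>\<^sup>+x. f x \<partial>M)
      \<le> (\<integral>\<^sup>+x. ennreal c1 * g1 x + ennreal c2 * g2 x + ennreal c3 * g3 x + ennreal c4 * g4 x \<partial>M)"
    by (rule nn_integral_mono_AE)
  also have "\<dots> = ennreal c1 * (\<integral>\<^sup>+x. g1 x \<partial>M) + ennreal c2 * (\<integral>\<^sup>+x. g2 x \<partial>M)
           + ennreal c3 * (\<integral>\<^sup>+x. g3 x \<partial>M) + ennreal c4 * (\<integral>\<^sup>+x. g4 x \<partial>M)"
    by (simp add: nn_integral_add nn_integral_cmult)
  finally show ?thesis .
qed

corollary nn_integral_le_lincomb3: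
  fixes f g1 g2 g3 :: "'a \<Rightarrow> real"
  assumes "AE x in M. f x \<le> c1 * g1 x + c2 * g2 x + c3 * g3 x"
    and "0 \<le> c1" "0 \<le> c2" "0 \<le> c3"
    and "\<And>x. 0 \<le> g1 x" "\<And>x. 0 \<le> g2 x" "\<And>x. 0 \<le> g3 x"
    and "g1 \<in> borel_measurable M" "g2 \<in> borel_measurable M" "g3 \<in> borel_measurable M"
  shows "(\<integral>\<^sup>+x. f x \<partial>M) \<le> ennreal c1 * (\<integral>\<^sup>+x. g1 x \<partial>M) + ennreal c2 * (\<integral>\<^sup>+x. g2 x \<partial>M)
           + ennreal c3 * (\<integral>\<^sup>+x. g3 x \<partial>M)"
proof -
  have "AE x in M. f x \<le> c1 * g1 x + c2 * g2 x + c3 * g3 x + 0 * 0"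
    using assms(1) by simp
  from nn_integral_le_lincomb[OF this assms(2-4) _ assms(5-7) _ assms(8-10)] show ?thesis
    by simp
qed

lemma complex_indicator_mult:
  fixes z :: complex
  shows "indicator S t * z = indicator S t *\<^sub>R z" "z * indicator S t = indicator S t *\<^sub>R z"
  by (simp_all add: indicator_def)

lemma le_Max_minus_add:
  fixes f g :: "'b \<Rightarrow> ennreal"
  assumes "finite K" "k \<in> K"
  shows "f k \<le> Max ((\<lambda>k. f k - g k) ` K) + g k"
proof -
  have "f k - g k \<le> Max ((\<lambda>k. f k - g k) ` K)"
    using assms by (intro Max_ge) auto
  then show ?thesis
    by (simp add: ennreal_minus_le_iff add.commute)
qed

lemma ennreal_mult_le_mult_factor:
  fixes c d e y :: ennreal
  shows "c \<le> d * e \<Longrightarrow> c * y \<le> d * y * e" and "1 \<le> d * e \<Longrightarrow> y \<le> d * y * e"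
  using mult_right_mono[of c "d * e" y] mult_right_mono[of 1 "d * e" y] by (simp_all add: ac_simps)

lemma real_le_of_mem_upto_floor: "k \<in> {1..nat \<lfloor>x\<rfloor>} \<Longrightarrow> real k \<le> x"
  by (metis atLeastAtMost_iff leD linorder_linear nat_floor_neg of_nat_floor of_nat_mono
      order_trans zero_less_one)

section \<open>Mellin transforms of densities\<close>

lemma norm_mpow: "cmod (mpow c x t) = x powr (c - 1)"
  by (simp add: mpow_def norm_mult)

lemma mpow_mult: "0 < x \<Longrightarrow> 0 < y \<Longrightarrow> mpow c (x * y) t = mpow c x t * mpow c y t"
  by (simp add: mpow_def powr_mult ln_mult distrib_left cis_mult[symmetric] mult_ac)

lemma measurable_cis [measurable]: "cis \<in> borel_measurable borel"
  by (intro borel_measurable_continuous_onI continuous_intros)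

lemma measurable_mpow [measurable]: "(\<lambda>p. mpow c (f p) (g p)) \<in> borel_measurable N"
  if [measurable]: "f \<in> borel_measurable N" "g \<in> borel_measurable N"
  unfolding mpow_def by measurable

lemma measurable_mellin [measurable]: "h \<in> borel_measurable borel \<Longrightarrow> mellin c h \<in> borel_measurable borel"
  unfolding mellin_def
  by (rule lborel.borel_measurable_lebesgue_integral) (simp add: split_beta')

lemma measurable_mellin_trunc [measurable]:
  "h \<in> borel_measurable borel \<Longrightarrow> mellin_trunc c h R \<in> borel_measurable borel"
  unfolding mellin_trunc_def
  by (rule lborel.borel_measurable_lebesgue_integral) (simp add: split_beta')

lemma density_measurable_of_distributed:
  assumes "distributed M lborel Z (\<lambda>x. ennreal (h x))" "\<And>x. 0 \<le> h x"
  shows "h \<in> borel_measurable borel"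
  using distributed_borel_measurable[OF assms(1)] assms(2) by simp

lemma set_mellin_eq_expectation:
  assumes Z: "distributed M lborel Z (\<lambda>x. ennreal (h x))" and h: "\<And>x. 0 \<le> h x"
    and S [measurable]: "S \<in> sets borel"
  shows "(LINT x|lborel. indicator S x *\<^sub>R (complex_of_real (h x) * mpow c x t))
    = (\<integral>\<omega>. indicator S (Z \<omega>) *\<^sub>R mpow c (Z \<omega>) t \<partial>M)"
proof -
  have [measurable]: "h \<in> borel_measurable borel" "Z \<in> borel_measurable M"
    using density_measurable_of_distributed[OF Z h] distributed_measurable[OF Z] by simp_all
  have "(\<integral>\<omega>. indicator S (Z \<omega>) *\<^sub>R mpow c (Z \<omega>) t \<partial>M)
      = integral\<^sup>L (distr M lborel Z) (\<lambda>x. indicator S x *\<^sub>R mpow c x t)"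
    by (rule integral_distr[symmetric]) simp_all
  also have "\<dots> = integral\<^sup>L (density lborel h) (\<lambda>x. indicator S x *\<^sub>R mpow c x t)"
    using distributed_distr_eq_density[OF Z] by simp
  also have "\<dots> = (LINT x|lborel. h x *\<^sub>R (indicator S x *\<^sub>R mpow c x t))"
    by (rule integral_density) (simp_all add: h)
  also have "\<dots> = (LINT x|lborel. indicator S x *\<^sub>R (complex_of_real (h x) * mpow c x t))"
    by (simp add: scaleR_conv_of_real mult_ac)
  finally show ?thesis ..
qed

lemma indicator_Icc_inverse_tendsto:
  "(\<lambda>j. indicator {1 / real j..real j} x :: real) \<longlonglongrightarrow> indicator {0<..} x"
proof (cases "0 < x")
  case True
  obtain N :: nat where N: "max x (1 / x) < real N"
    using reals_Archimedean2 by blast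
  have "x \<in> {1 / real j..real j}" if "N \<le> j" for j
  proof -
    have "max x (1 / x) < real j"
      using N that by (meson less_le_trans of_nat_le_iff)
    with True show ?thesis
      by (simp add: field_simps)
  qed
  then have "eventually (\<lambda>j. indicator {1 / real j..real j} x = (1 :: real)) sequentially"
    by (intro eventually_sequentiallyI[of N]) simp
  with True show ?thesis
    by (simp add: tendsto_eventually)
next
  case False
  have "x \<notin> {1 / real j..real j}" if "1 \<le> j" for j
  proof
    assume "x \<in> {1 / real j..real j}"
    then have "1 / real j \<le> x" by simp
    moreover have "0 < 1 / real j" using that by simp
    ultimately show False using False by linarith
  qed
  then have "eventually (\<lambda>j. indicator {1 / real j..real j} x = (0 :: real)) sequentially"
    by (intro eventually_sequentiallyI[of 1]) simp
  with False show ?thesis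
    by (simp add: tendsto_eventually)
qed

lemma mellin_trunc_tendsto:
  assumes X: "distributed M lborel X (\<lambda>x. ennreal (f x))" and f: "\<And>x. 0 \<le> f x"
    and moment: "integrable M (\<lambda>\<omega>. X \<omega> powr (c - 1))"
  shows "(\<lambda>j. mellin_trunc c f (real j) t) \<longlonglongrightarrow> mellin c f t"
proof -
  have [measurable]: "X \<in> borel_measurable M"
    using distributed_measurable[OF X] by simp
  have "(\<lambda>j. \<integral>\<omega>. indicator {1 / real j..real j} (X \<omega>) *\<^sub>R mpow c (X \<omega>) t \<partial>M)
      \<longlonglongrightarrow> (\<integral>\<omega>. indicator {0<..} (X \<omega>) *\<^sub>R mpow c (X \<omega>) t \<partial>M)"
  proof (rule integral_dominated_convergence[where w = "\<lambda>\<omega>. X \<omega> powr (c - 1)"])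
    show "AE \<omega> in M. (\<lambda>j. indicator {1 / real j..real j} (X \<omega>) *\<^sub>R mpow c (X \<omega>) t)
        \<longlonglongrightarrow> indicator {0<..} (X \<omega>) *\<^sub>R mpow c (X \<omega>) t"
      by (intro AE_I2 tendsto_scaleR indicator_Icc_inverse_tendsto tendsto_const)
    show "AE \<omega> in M. norm (indicator {1 / real j..real j} (X \<omega>) *\<^sub>R mpow c (X \<omega>) t) \<le> X \<omega> powr (c - 1)"
      for j
      by (intro AE_I2) (simp add: norm_mpow indicator_def)
  qed (simp_all add: moment)
  then show ?thesis
    unfolding mellin_trunc_def mellin_def
    by (simp add: set_mellin_eq_expectation[OF X f])
qed

lemma is_mellin_L2_measurable: "is_mellin_L2 c h G \<Longrightarrow> G \<in> borel_measurable borel"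
  by (simp add: is_mellin_L2_def)

lemma is_mellin_L2_AE_eq_mellin:
  assumes G: "is_mellin_L2 c h G" and [measurable]: "h \<in> borel_measurable borel"
    and lim: "\<And>t. (\<lambda>j. mellin_trunc c h (real j) t) \<longlonglongrightarrow> mellin c h t"
  shows "AE t in lborel. G t = mellin c h t"
proof -
  have [measurable]: "G \<in> borel_measurable borel"
    using G by (rule is_mellin_L2_measurable)
  define u where "u j = (\<lambda>t. ennreal ((cmod (G t - mellin_trunc c h (real j) t))\<^sup>2))" for j
  have "(\<lambda>j. integral\<^sup>N lborel (u j)) \<longlonglongrightarrow> 0"
    using filterlim_compose[OF G[unfolded is_mellin_L2_def, THEN conjunct2] filterlim_real_sequentially]
    by (simp add: u_def o_def)
  then have "liminf (\<lambda>j. integral\<^sup>N lborel (u j)) = 0"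
    by (simp add: lim_imp_Liminf)
  moreover have "liminf (\<lambda>j. u j t) = ennreal ((cmod (G t - mellin c h t))\<^sup>2)" for t
    unfolding u_def by (intro lim_imp_Liminf tendsto_ennrealI tendsto_intros lim) simp
  ultimately have "(\<integral>\<^sup>+ t. ennreal ((cmod (G t - mellin c h t))\<^sup>2) \<partial>lborel) \<le> 0"
    using nn_integral_liminf[of u lborel] by (simp add: u_def)
  then have "AE t in lborel. ennreal ((cmod (G t - mellin c h t))\<^sup>2) = 0"
    by (subst nn_integral_0_iff_AE[symmetric]) simp_all
  then show ?thesis
    by eventually_elim simp
qed

section \<open>Products of independent random variables\<close>

lemma (in prob_space) indep_var_nn_integral:
  fixes X Y :: "'a \<Rightarrow> ennreal"
  assumes "indep_var borel X borel Y"
  shows "(\<integral>\<^sup>+\<omega>. X \<omega> * Y \<omega> \<partial>M) = (\<integral>\<^sup>+\<omega>. X \<omega> \<partial>M) * (\<integral>\<^sup>+\<omega>. Y \<omega> \<partial>M)"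
proof -
  have "case_bool borel borel = (\<lambda>_::bool. borel :: ennreal measure)"
    by (simp add: fun_eq_iff split: bool.split)
  then have "indep_vars (\<lambda>_. borel) (case_bool X Y) UNIV"
    using assms unfolding indep_var_def by simp
  from indep_vars_nn_integral[OF _ this] show ?thesis
    by (simp add: UNIV_bool mult.commute)
qed

lemma powr_le_1_plus_powr_double: "y powr a \<le> 1 + y powr (2 * a)" for y a :: real
proof -
  have "y powr (2 * a) = (y powr a)\<^sup>2"
    unfolding mult_2 powr_add by (simp only: power2_eq_square)
  moreover have "z \<le> 1 + z\<^sup>2" for z :: real
  proof -
    have "0 \<le> (z - 1)\<^sup>2"
      by simp
    then have "2 * z \<le> z\<^sup>2 + 1"
      by (simp add: power2_diff)
    then show ?thesis
      using zero_le_power2[of z] by linarith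
  qed
  ultimately show ?thesis
    by simp
qed

lemma (in finite_measure) integrable_powr_of_double:
  fixes Z :: "'a \<Rightarrow> real"
  assumes "integrable M (\<lambda>\<omega>. Z \<omega> powr (2 * a))" and [measurable]: "Z \<in> borel_measurable M"
  shows "integrable M (\<lambda>\<omega>. Z \<omega> powr a)"
proof (rule Bochner_Integration.integrable_bound)
  show "integrable M (\<lambda>\<omega>. 1 + Z \<omega> powr (2 * a))"
    using assms(1) by simp
  show "AE \<omega> in M. norm (Z \<omega> powr a) \<le> norm (1 + Z \<omega> powr (2 * a))"
    using powr_le_1_plus_powr_double by (intro AE_I2) simp
qed simp

lemma (in prob_space) nn_integral_powr_pos:
  fixes Z :: "'a \<Rightarrow> real"
  assumes pos: "AE \<omega> in M. 0 < Z \<omega>" and [measurable]: "Z \<in> borel_measurable M"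
  shows "(\<integral>\<^sup>+\<omega>. ennreal (Z \<omega> powr a) \<partial>M) \<noteq> 0"
proof
  assume "(\<integral>\<^sup>+\<omega>. ennreal (Z \<omega> powr a) \<partial>M) = 0"
  then have "AE \<omega> in M. ennreal (Z \<omega> powr a) = 0"
    using nn_integral_0_iff_AE[of "\<lambda>\<omega>. ennreal (Z \<omega> powr a)" M] by simp
  with pos have "AE \<omega> in M. False"
    by eventually_elim simp
  then show False
    by simp
qed

lemma (in prob_space) indep_integrable_powr_factors:
  fixes X U :: "'a \<Rightarrow> real"
  assumes indep: "indep_var borel X borel U"
    and pos: "AE \<omega> in M. 0 < X \<omega>" "AE \<omega> in M. 0 < U \<omega>"
    and prod: "integrable M (\<lambda>\<omega>. (X \<omega> * U \<omega>) powr a)"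
  shows "integrable M (\<lambda>\<omega>. X \<omega> powr a)" "integrable M (\<lambda>\<omega>. U \<omega> powr a)"
proof -
  have rv [measurable]: "X \<in> borel_measurable M" "U \<in> borel_measurable M"
    using indep_var_rv1[OF indep] indep_var_rv2[OF indep] by simp_all
  define mX where "mX = (\<integral>\<^sup>+\<omega>. ennreal (X \<omega> powr a) \<partial>M)"
  define mU where "mU = (\<integral>\<^sup>+\<omega>. ennreal (U \<omega> powr a) \<partial>M)"
  have "indep_var borel ((\<lambda>x. ennreal (x powr a)) \<circ> X) borel ((\<lambda>x. ennreal (x powr a)) \<circ> U)"
    by (rule indep_var_compose[OF indep]) simp_all
  then have "mX * mU = (\<integral>\<^sup>+\<omega>. ennreal (X \<omega> powr a) * ennreal (U \<omega> powr a) \<partial>M)"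
    unfolding mX_def mU_def by (simp add: indep_var_nn_integral o_def)
  also have "\<dots> = (\<integral>\<^sup>+\<omega>. ennreal ((X \<omega> * U \<omega>) powr a) \<partial>M)"
    by (simp add: powr_mult ennreal_mult)
  also have "\<dots> < \<infinity>"
    using prod by (simp add: integrable_iff_bounded)
  finally have "mX * mU < \<infinity>" .
  moreover have "mX \<noteq> 0" "mU \<noteq> 0"
    unfolding mX_def mU_def
    by (rule nn_integral_powr_pos[OF pos(1) rv(1)], rule nn_integral_powr_pos[OF pos(2) rv(2)])
  ultimately have "mX < \<infinity>" "mU < \<infinity>"
    using ennreal_mult_less_top[of mX mU] by auto
  then show "integrable M (\<lambda>\<omega>. X \<omega> powr a)" "integrable M (\<lambda>\<omega>. U \<omega> powr a)"
    unfolding mX_def mU_def by (intro integrableI_bounded; simp)+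
qed

lemma (in prob_space) mellin_product:
  fixes X U :: "'a \<Rightarrow> real" and f fU fY :: "real \<Rightarrow> real"
  assumes X: "distributed M lborel X (\<lambda>x. ennreal (f x))" and f: "\<And>x. 0 \<le> f x"
    and U: "distributed M lborel U (\<lambda>x. ennreal (fU x))" and fU: "\<And>x. 0 \<le> fU x"
    and Y: "distributed M lborel (\<lambda>\<omega>. X \<omega> * U \<omega>) (\<lambda>x. ennreal (fY x))" and fY: "\<And>x. 0 \<le> fY x"
    and indep: "indep_var borel X borel U"
    and pos: "AE \<omega> in M. 0 < X \<omega>" "AE \<omega> in M. 0 < U \<omega>"
    and moments: "integrable M (\<lambda>\<omega>. X \<omega> powr (c - 1))" "integrable M (\<lambda>\<omega>. U \<omega> powr (c - 1))"
  shows "mellin c fY t = mellin c f t * mellin c fU t"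
proof -
  define g where "g x = indicator {0<..} x *\<^sub>R mpow c x t" for x
  have [measurable]: "g \<in> borel_measurable borel"
    unfolding g_def by measurable
  have [measurable]: "X \<in> borel_measurable M" "U \<in> borel_measurable M"
    using indep_var_rv1[OF indep] indep_var_rv2[OF indep] by simp_all
  have mellin_eq: "mellin c h t = (\<integral>\<omega>. g (Z \<omega>) \<partial>M)"
    if "distributed M lborel Z (\<lambda>x. ennreal (h x))" "\<And>x. 0 \<le> h x" for Z h
    unfolding mellin_def g_def using that by (rule set_mellin_eq_expectation) simp
  have integrable: "integrable M (\<lambda>\<omega>. g (Z \<omega>))"
    if "integrable M (\<lambda>\<omega>. Z \<omega> powr (c - 1))" and [measurable]: "Z \<in> borel_measurable M" for Z
    using that(1) by (rule Bochner_Integration.integrable_bound) (simp_all add: g_def norm_mpow indicator_def)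
  have "indep_var borel (g \<circ> X) borel (g \<circ> U)"
    by (rule indep_var_compose[OF indep]) simp_all
  have "mellin c fY t = (\<integral>\<omega>. g (X \<omega> * U \<omega>) \<partial>M)"
    using Y fY by (rule mellin_eq)
  also have "\<dots> = (\<integral>\<omega>. g (X \<omega>) * g (U \<omega>) \<partial>M)"
    using pos by (intro integral_cong_AE) (auto simp: g_def mpow_mult)
  also have "\<dots> = (\<integral>\<omega>. g (X \<omega>) \<partial>M) * (\<integral>\<omega>. g (U \<omega>) \<partial>M)"
    using indep_var_lebesgue_integral[OF \<open>indep_var borel (g \<circ> X) borel (g \<circ> U)\<close>]
      integrable[OF moments(1)] integrable[OF moments(2)] by (simp add: comp_def)
  also have "\<dots> = mellin c f t * mellin c fU t"
    using mellin_eq[OF X f] mellin_eq[OF U fU] by simp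
  finally show ?thesis .
qed

lemma (in prob_space) mellin_factorization:
  fixes X U :: "'a \<Rightarrow> real" and f fU fY :: "real \<Rightarrow> real"
  assumes X: "distributed M lborel X (\<lambda>x. ennreal (f x))" and f: "\<And>x. 0 \<le> f x"
    and U: "distributed M lborel U (\<lambda>x. ennreal (fU x))" and fU: "\<And>x. 0 \<le> fU x"
    and Y: "distributed M lborel (\<lambda>\<omega>. X \<omega> * U \<omega>) (\<lambda>x. ennreal (fY x))" and fY: "\<And>x. 0 \<le> fY x"
    and indep: "indep_var borel X borel U"
    and pos: "AE \<omega> in M. 0 < X \<omega>" "AE \<omega> in M. 0 < U \<omega>"
    and Y_moment: "integrable M (\<lambda>\<omega>. (X \<omega> * U \<omega>) powr (2 * (c - 1)))"
    and MX: "is_mellin_L2 c f MX"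
  shows "AE t in lborel. mellin c fY t = MX t * mellin c fU t"
proof -
  have "(\<lambda>\<omega>. X \<omega> * U \<omega>) \<in> borel_measurable M"
    using distributed_measurable[OF Y] by simp
  from indep_integrable_powr_factors[OF indep pos integrable_powr_of_double[OF Y_moment this]]
  have moments: "integrable M (\<lambda>\<omega>. X \<omega> powr (c - 1))" "integrable M (\<lambda>\<omega>. U \<omega> powr (c - 1))" .
  have "AE t in lborel. MX t = mellin c f t"
    using MX density_measurable_of_distributed[OF X f] mellin_trunc_tendsto[OF X f moments(1)]
    by (rule is_mellin_L2_AE_eq_mellin)
  then show ?thesis
    by eventually_elim (simp add: mellin_product[OF X f U fU Y fY indep pos moments])
qed

section \<open>The spectral cut-off estimator\<close>

lemma measurable_emp_mellin [measurable]: "emp_mellin c N Z \<omega> \<in> borel_measurable borel"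
  unfolding emp_mellin_def by measurable

lemma measurable_MUinv [measurable]: "MUinv c n m Us \<omega> \<in> borel_measurable borel"
proof -
  have [measurable]: "Mset c n m Us \<omega> \<in> sets borel"
    unfolding Mset_def by measurable
  show ?thesis
    unfolding MUinv_def dagger_def by measurable
qed

lemma Delta_nonneg:
  assumes "\<And>t. 0 \<le> w t"
  shows "0 \<le> Delta w k"
proof -
  let ?g = "\<lambda>t. ereal (indicator {-k..k} t * w t)"
  have "0 \<le> esssup lborel ?g"
  proof (rule ccontr)
    assume neg: "\<not> 0 \<le> esssup lborel ?g"
    from esssup_AE[of ?g lborel] have "AE (t::real) in lborel. False"
    proof eventually_elim
      case (elim t)
      have "0 \<le> ?g t"
        using assms by simp
      with elim neg show ?case
        by (meson order_trans)
    qed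
    moreover have "ae_filter (lborel :: real measure) \<noteq> bot"
      by (simp add: ae_filter_eq_bot_iff)
    ultimately show False
      by (simp add: eventually_const_iff)
  qed
  then show ?thesis
    unfolding Delta_def by (simp add: real_of_ereal_pos)
qed

lemma pen_nonneg:
  assumes "\<And>t. 0 \<le> w t" "0 \<le> k"
  shows "0 \<le> pen n w k"
proof -
  have "0 \<le> delta w k"
    using assms(2) unfolding delta_def by simp
  then show ?thesis
    unfolding pen_def using Delta_nonneg[OF assms(1)] assms(2) by simp
qed

lemma sigmahat2_nonneg: "0 \<le> sigmahat2 c n Ys \<omega>"
  unfolding sigmahat2_def by (simp add: sum_nonneg)

lemma norm_emp_mellin_le: "cmod (emp_mellin c N Z \<omega> t) \<le> (\<Sum>i<N. Z i \<omega> powr (c - 1)) / real N"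
proof -
  have "cmod (\<Sum>i<N. mpow c (Z i \<omega>) t) \<le> (\<Sum>i<N. Z i \<omega> powr (c - 1))"
    using norm_sum[of "\<lambda>i. mpow c (Z i \<omega>) t" "{..<N}"] by (simp add: norm_mpow)
  then show ?thesis
    unfolding emp_mellin_def by (simp add: norm_divide divide_right_mono)
qed

lemma norm_MUinv_sq_le: "(cmod (MUinv c n m Us \<omega> t))\<^sup>2 \<le> real (min m n)"
proof (cases "t \<in> Mset c n m Us \<omega>")
  case True
  define e where "e = emp_mellin c m Us \<omega> t"
  have e: "1 \<le> real (min m n) * (cmod e)\<^sup>2"
    using True by (simp add: Mset_def e_def)
  then have "e \<noteq> 0"
    by auto
  then have "(cmod (MUinv c n m Us \<omega> t))\<^sup>2 = 1 / (cmod e)\<^sup>2"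
    using True by (simp add: MUinv_def dagger_def e_def norm_divide power_divide)
  also have "\<dots> \<le> real (min m n)"
    using e \<open>e \<noteq> 0\<close> by (simp add: field_simps)
  finally show ?thesis .
next
  case False
  then show ?thesis
    by (simp add: MUinv_def)
qed

lemma L2sq_truncation_finite:
  fixes h :: "real \<Rightarrow> complex"
  assumes bound: "\<And>t. (cmod (h t))\<^sup>2 \<le> C" and v_nonneg: "\<And>t. 0 \<le> v t"
    and v_Linf: "esssup lborel (\<lambda>t. ereal (indicator {-k..k} t * v t)) < \<infinity>"
  shows "L2sq v (\<lambda>t. h t * indicator {-k..k} t) < \<infinity>"
proof -
  have "0 \<le> C"
    using bound[of 0] by (rule order_trans[OF zero_le_power2])
  define V where "V = max 0 (real_of_ereal (esssup lborel (\<lambda>t. ereal (indicator {-k..k} t * v t))))"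
  have "AE t in lborel. indicator {-k..k} t * v t \<le> V"
    using esssup_AE[of "\<lambda>t. ereal (indicator {-k..k} t * v t)" lborel]
  proof eventually_elim
    case (elim t)
    then show ?case
      using v_Linf unfolding V_def
      by (cases "esssup lborel (\<lambda>t. ereal (indicator {-k..k} t * v t))") auto
  qed
  then have "AE t in lborel. ennreal ((cmod (h t * indicator {-k..k} t))\<^sup>2 * v t)
      \<le> ennreal (C * V) * indicator {-k..k} t"
  proof eventually_elim
    case (elim t)
    have "(cmod (h t))\<^sup>2 * v t \<le> C * V" if "t \<in> {-k..k}"
      using elim that bound[of t] v_nonneg[of t] \<open>0 \<le> C\<close> by (intro mult_mono) auto
    then show ?case
      by (auto simp: indicator_def intro: ennreal_leI)
  qed
  then have "L2sq v (\<lambda>t. h t * indicator {-k..k} t) \<le> (\<integral>\<^sup>+t. ennreal (C * V) * indicator {-k..k} t \<partial>lborel)"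
    unfolding L2sq_def by (rule nn_integral_mono_AE)
  also have "\<dots> < \<infinity>"
    by (simp add: nn_integral_cmult_indicator ennreal_mult_less_top emeasure_lborel_Icc_eq)
  finally show ?thesis .
qed

lemma MXhatk_eq:
  "MXhatk c n m Ys Us k \<omega> = (\<lambda>t. emp_mellin c n Ys \<omega> t * MUinv c n m Us \<omega> t * indicator {-k..k} t)"
  by (simp add: fun_eq_iff MXhatk_def MXhat_def)

lemma L2sq_MXhatk_finite:
  assumes "\<And>t. 0 \<le> v t" "esssup lborel (\<lambda>t. ereal (indicator {-k..k} t * v t)) < \<infinity>"
  shows "L2sq v (MXhatk c n m Ys Us k \<omega>) < \<infinity>"
proof -
  have "(cmod (emp_mellin c n Ys \<omega> t * MUinv c n m Us \<omega> t))\<^sup>2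
      \<le> ((\<Sum>i<n. Ys i \<omega> powr (c - 1)) / real n)\<^sup>2 * real (min m n)" for t
    unfolding norm_mult power_mult_distrib
    by (intro mult_mono power_mono norm_emp_mellin_le norm_MUinv_sq_le) simp_all
  then show ?thesis
    unfolding MXhatk_eq using assms by (rule L2sq_truncation_finite)
qed

lemma pen_vhat_nonneg: "(\<And>t. 0 \<le> v t) \<Longrightarrow> 0 \<le> pen n (vhat c n m Us v \<omega>) (real k)"
  by (rule pen_nonneg) (simp_all add: vhat_def)

section \<open>A deterministic oracle inequality\<close>

(* a is M_X, Yh the empirical Mellin transform of Y, MY and MU the Mellin transforms of Y and U,
   and W the regularised inverse of the empirical Mellin transform of U. *)
locale oracle_setting =
  fixes v :: "real \<Rightarrow> real" and a Yh MY MU W :: "real \<Rightarrow> complex" and kn :: real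
  assumes v_measurable [measurable]: "v \<in> borel_measurable borel"
    and v_nonneg: "\<And>t. 0 \<le> v t"
    and params_measurable [measurable]: "a \<in> borel_measurable borel" "Yh \<in> borel_measurable borel"
      "MY \<in> borel_measurable borel" "MU \<in> borel_measurable borel" "W \<in> borel_measurable borel"
    and MY_factor: "AE t in lborel. MY t = a t * MU t"
begin

definition est_norm :: "real \<Rightarrow> ennreal" where
  "est_norm k = L2sq v (\<lambda>t. Yh t * W t * indicator {-k..k} t)"

definition risk :: "real \<Rightarrow> ennreal" where
  "risk k = L2sq v (\<lambda>t. Yh t * W t * indicator {-k..k} t - a t)"

definition dev :: "real \<Rightarrow> ennreal" where
  "dev k = L2sq v (\<lambda>t. indicator {-k..k} t * (Yh t - MY t) * W t)"

definition bias :: "real \<Rightarrow> ennreal" where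
  "bias k = L2sq v (\<lambda>t. indicator (- {-k..k}) t * a t)"

definition dev_U :: ennreal where
  "dev_U = L2sq v (\<lambda>t. (MU t * W t - 1) * a t * indicator {-kn..kn} t)"

definition band :: "real \<Rightarrow> real \<Rightarrow> ennreal" where
  "band k l = L2sq v (\<lambda>t. indicator ({-l..l} - {-k..k}) t * (Yh t * W t))"

lemma error_decomposition:
  "AE t in lborel. Yh t * W t - a t = (Yh t - MY t) * W t + (MU t * W t - 1) * a t"
  using MY_factor by eventually_elim (simp add: algebra_simps)

lemma est_norm_split:
  assumes "k \<le> l"
  shows "est_norm l = est_norm k + band k l"
proof -
  have "ennreal ((cmod (Yh t * W t * indicator {-l..l} t))\<^sup>2 * v t)
      = ennreal ((cmod (Yh t * W t * indicator {-k..k} t))\<^sup>2 * v t)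
        + ennreal ((cmod (indicator ({-l..l} - {-k..k}) t * (Yh t * W t)))\<^sup>2 * v t)" for t
    using assms by (cases "t \<in> {-k..k}"; cases "t \<in> {-l..l}") auto
  then show ?thesis
    unfolding est_norm_def band_def L2sq_def
    by (simp add: nn_integral_add)
qed

lemma bias_le: "bias k \<le> L2sq v a"
  unfolding bias_def L2sq_def
  by (intro nn_integral_mono ennreal_leI mult_right_mono) (simp_all add: v_nonneg indicator_def)

lemma bias_antimono:
  assumes "k \<le> l"
  shows "bias l \<le> bias k"
  unfolding bias_def L2sq_def
  using assms by (intro nn_integral_mono ennreal_leI mult_right_mono) (simp_all add: v_nonneg indicator_def)

lemma risk_le_crude:
  assumes "k \<le> kn"
  shows "risk k \<le> 2 * dev kn + 2 * dev_U + bias k"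
proof -
  have "AE t in lborel. (cmod (Yh t * W t * indicator {-k..k} t - a t))\<^sup>2 * v t
      \<le> 2 * ((cmod (indicator {-kn..kn} t * (Yh t - MY t) * W t))\<^sup>2 * v t)
        + 2 * ((cmod ((MU t * W t - 1) * a t * indicator {-kn..kn} t))\<^sup>2 * v t)
        + 1 * ((cmod (indicator (- {-k..k}) t * a t))\<^sup>2 * v t)"
    using error_decomposition
  proof eventually_elim
    case (elim t)
    from truncation_error_crude[OF elim, of "{-k..k}" "{-kn..kn}" t] assms
    have "(cmod (Yh t * W t * indicator {-k..k} t - a t))\<^sup>2
        \<le> 2 * (cmod (indicator {-kn..kn} t * (Yh t - MY t) * W t))\<^sup>2
          + 2 * (cmod ((MU t * W t - 1) * a t * indicator {-kn..kn} t))\<^sup>2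
          + (cmod (indicator (- {-k..k}) t * a t))\<^sup>2"
      by (simp add: complex_indicator_mult)
    from mult_right_mono[OF this v_nonneg] show ?case
      by (simp add: algebra_simps)
  qed
  then have "risk k \<le> ennreal 2 * dev kn + ennreal 2 * dev_U + ennreal 1 * bias k"
    unfolding risk_def dev_def dev_U_def bias_def L2sq_def
    by (rule nn_integral_le_lincomb3) (simp_all add: v_nonneg)
  then show ?thesis by simp
qed

lemma risk_plus_band_le:
  assumes "k0 \<le> k" "k \<le> kn"
  shows "risk k + band k0 k \<le> 4 * dev k + 12 * dev_U + 2 * bias k0"
proof -
  have "AE t in lborel. (cmod (Yh t * W t * indicator {-k..k} t - a t))\<^sup>2 * v t
        + (cmod (indicator ({-k..k} - {-k0..k0}) t * (Yh t * W t)))\<^sup>2 * v t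
      \<le> 4 * ((cmod (indicator {-k..k} t * (Yh t - MY t) * W t))\<^sup>2 * v t)
        + 12 * ((cmod ((MU t * W t - 1) * a t * indicator {-kn..kn} t))\<^sup>2 * v t)
        + 2 * ((cmod (indicator (- {-k0..k0}) t * a t))\<^sup>2 * v t)"
    using error_decomposition
  proof eventually_elim
    case (elim t)
    from truncation_error_above[OF elim, of "{-k0..k0}" "{-k..k}" "{-kn..kn}" t] assms
    have "(cmod (Yh t * W t * indicator {-k..k} t - a t))\<^sup>2
          + (cmod (indicator ({-k..k} - {-k0..k0}) t * (Yh t * W t)))\<^sup>2
        \<le> 4 * (cmod (indicator {-k..k} t * (Yh t - MY t) * W t))\<^sup>2
          + 12 * (cmod ((MU t * W t - 1) * a t * indicator {-kn..kn} t))\<^sup>2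
          + 2 * (cmod (indicator (- {-k0..k0}) t * a t))\<^sup>2"
      by (simp add: complex_indicator_mult)
    from mult_right_mono[OF this v_nonneg] show ?case
      by (simp add: algebra_simps)
  qed
  then have "(\<integral>\<^sup>+t. ennreal ((cmod (Yh t * W t * indicator {-k..k} t - a t))\<^sup>2 * v t
        + (cmod (indicator ({-k..k} - {-k0..k0}) t * (Yh t * W t)))\<^sup>2 * v t) \<partial>lborel)
      \<le> ennreal 4 * dev k + ennreal 12 * dev_U + ennreal 2 * bias k0"
    unfolding dev_def dev_U_def bias_def L2sq_def
    by (rule nn_integral_le_lincomb3) (simp_all add: v_nonneg)
  moreover have "risk k + band k0 k
      = (\<integral>\<^sup>+t. ennreal ((cmod (Yh t * W t * indicator {-k..k} t - a t))\<^sup>2 * v t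
        + (cmod (indicator ({-k..k} - {-k0..k0}) t * (Yh t * W t)))\<^sup>2 * v t) \<partial>lborel)"
    unfolding risk_def band_def L2sq_def
    by (simp add: nn_integral_add[symmetric] v_nonneg ennreal_plus[symmetric]
        del: ennreal_plus)
  ultimately show ?thesis by simp
qed

lemma risk_le_band:
  assumes "k \<le> k0" "k0 \<le> kn"
  shows "risk k \<le> 4 * dev k0 + 4 * dev_U + bias k0 + 2 * band k k0"
proof -
  have "AE t in lborel. (cmod (Yh t * W t * indicator {-k..k} t - a t))\<^sup>2 * v t
      \<le> 4 * ((cmod (indicator {-k0..k0} t * (Yh t - MY t) * W t))\<^sup>2 * v t)
        + 4 * ((cmod ((MU t * W t - 1) * a t * indicator {-kn..kn} t))\<^sup>2 * v t)
        + 1 * ((cmod (indicator (- {-k0..k0}) t * a t))\<^sup>2 * v t)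
        + 2 * ((cmod (indicator ({-k0..k0} - {-k..k}) t * (Yh t * W t)))\<^sup>2 * v t)"
    using error_decomposition
  proof eventually_elim
    case (elim t)
    from truncation_error_below[OF elim, of "{-k..k}" "{-k0..k0}" "{-kn..kn}" t] assms
    have "(cmod (Yh t * W t * indicator {-k..k} t - a t))\<^sup>2
        \<le> 4 * (cmod (indicator {-k0..k0} t * (Yh t - MY t) * W t))\<^sup>2
          + 4 * (cmod ((MU t * W t - 1) * a t * indicator {-kn..kn} t))\<^sup>2
          + (cmod (indicator (- {-k0..k0}) t * a t))\<^sup>2
          + 2 * (cmod (indicator ({-k0..k0} - {-k..k}) t * (Yh t * W t)))\<^sup>2"
      by (simp add: complex_indicator_mult)
    from mult_right_mono[OF this v_nonneg] show ?case
      by (simp add: algebra_simps)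
  qed
  then have "risk k \<le> ennreal 4 * dev k0 + ennreal 4 * dev_U + ennreal 1 * bias k0 + ennreal 2 * band k k0"
    unfolding risk_def dev_def dev_U_def bias_def band_def L2sq_def
    by (rule nn_integral_le_lincomb) (simp_all add: v_nonneg)
  then show ?thesis by simp
qed

lemma risk_le_above:
  assumes "k0 \<le> k" "k \<le> kn" "est_norm k < \<infinity>"
    and crit: "- enn2real (est_norm k) + P \<le> - enn2real (est_norm k0) + P0"
    and "0 \<le> P0" and dev_bound: "4 * dev k \<le> B + ennreal P"
  shows "risk k \<le> B + 12 * dev_U + 2 * bias k0 + ennreal P0"
proof -
  have split: "est_norm k = est_norm k0 + band k0 k"
    using assms(1) by (rule est_norm_split)
  with assms(3) have "est_norm k0 < \<infinity>" and band_finite: "band k0 k < \<infinity>"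
    by auto
  then have "enn2real (est_norm k) = enn2real (est_norm k0) + enn2real (band k0 k)"
    by (simp add: split enn2real_plus)
  with crit have "P \<le> P0 + enn2real (band k0 k)"
    by linarith
  then have "ennreal P \<le> ennreal (P0 + enn2real (band k0 k))"
    by (rule ennreal_leI)
  also have "\<dots> = ennreal P0 + band k0 k"
    using band_finite \<open>0 \<le> P0\<close> by (subst ennreal_plus) auto
  finally have "ennreal P \<le> ennreal P0 + band k0 k" .
  have "risk k + band k0 k \<le> 4 * dev k + 12 * dev_U + 2 * bias k0"
    using assms(1,2) by (rule risk_plus_band_le)
  also have "\<dots> \<le> B + ennreal P + 12 * dev_U + 2 * bias k0"
    using dev_bound by (intro add_right_mono)
  also have "\<dots> \<le> B + (ennreal P0 + band k0 k) + 12 * dev_U + 2 * bias k0"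
    using \<open>ennreal P \<le> ennreal P0 + band k0 k\<close> by (intro add_right_mono add_left_mono)
  also have "\<dots> = (B + 12 * dev_U + 2 * bias k0 + ennreal P0) + band k0 k"
    by (simp add: ac_simps)
  finally show ?thesis
    using band_finite by (simp add: ennreal_add_left_cancel_le add.commute[of _ "band k0 k"] less_top[symmetric])
qed

lemma risk_le_below:
  assumes "k \<le> k0" "k0 \<le> kn" "est_norm k0 < \<infinity>"
    and crit: "- enn2real (est_norm k) + P \<le> - enn2real (est_norm k0) + P0"
    and "0 \<le> P"
  shows "risk k \<le> 4 * dev k0 + 4 * dev_U + bias k0 + 2 * ennreal P0"
proof -
  have split: "est_norm k0 = est_norm k + band k k0"
    using assms(1) by (rule est_norm_split)
  with assms(3) have "est_norm k < \<infinity>" and band_finite: "band k k0 < \<infinity>"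
    by auto
  then have "enn2real (est_norm k0) = enn2real (est_norm k) + enn2real (band k k0)"
    by (simp add: split enn2real_plus)
  with crit \<open>0 \<le> P\<close> have "enn2real (band k k0) \<le> P0"
    by linarith
  then have "ennreal (enn2real (band k k0)) \<le> ennreal P0"
    by (rule ennreal_leI)
  then have "band k k0 \<le> ennreal P0"
    using band_finite by simp
  have "risk k \<le> 4 * dev k0 + 4 * dev_U + bias k0 + 2 * band k k0"
    using assms(1,2) by (rule risk_le_band)
  also have "\<dots> \<le> 4 * dev k0 + 4 * dev_U + bias k0 + 2 * ennreal P0"
    using \<open>band k k0 \<le> ennreal P0\<close> by (intro add_left_mono mult_left_mono) simp_all
  finally show ?thesis .
qed

definition oracle_bound :: "nat \<Rightarrow> (nat \<Rightarrow> real) \<Rightarrow> real \<Rightarrow> real \<Rightarrow> 'b set \<Rightarrow> 'b \<Rightarrow> ennreal" where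
  "oracle_bound k0 p sh sig E x =
    15 * dev (real k0) + 15 * bias (real k0) + ennreal (24 * sh * p k0) * indicator E x
    + 6 * L2sq v a * indicator (- E) x + 15 * dev_U
    + 12 * Max ((\<lambda>k. dev (real k) - ennreal (sig / 4 * p k)) ` {1..nat \<lfloor>kn\<rfloor>})
    + 3 * dev kn * (indicator (- E) x + (if sig \<le> 2 * sh then 0 else 1))"

context
  fixes kh k0 :: nat and p :: "nat \<Rightarrow> real" and sh sig :: real
  assumes kh: "kh \<in> {1..nat \<lfloor>kn\<rfloor>}" and k0: "k0 \<in> {1..nat \<lfloor>kn\<rfloor>}"
    and est_norm_finite: "est_norm (real kh) < \<infinity>" "est_norm (real k0) < \<infinity>"
    and crit: "- enn2real (est_norm (real kh)) + 2 * sh * p kh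
      \<le> - enn2real (est_norm (real k0)) + 2 * sh * p k0"
    and nonneg: "0 \<le> sh" "0 \<le> p kh" "0 \<le> p k0"
begin

lemma kh_le: "real kh \<le> kn" and k0_le: "real k0 \<le> kn"
  using kh k0 by (simp_all add: real_le_of_mem_upto_floor)

lemma penalty_mono: "c \<le> 24 \<Longrightarrow> ennreal (c * sh * p k0) \<le> ennreal (24 * sh * p k0)"
  using nonneg by (intro ennreal_leI mult_right_mono) simp_all

lemma risk_le_oracle_bound_off_event:
  assumes "x \<notin> E"
  shows "risk (real kh) \<le> oracle_bound k0 p sh sig E x"
proof -
  have "risk (real kh) \<le> 2 * dev kn + 2 * dev_U + L2sq v a"
    using order_trans[OF risk_le_crude[OF kh_le] add_left_mono[OF bias_le]] .
  also have "\<dots> = 0 + 0 + 0 + L2sq v a + 2 * dev_U + 0 + 2 * dev kn"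
    by (simp add: ac_simps)
  also have "\<dots> \<le> oracle_bound k0 p sh sig E x"
    unfolding oracle_bound_def
    by (intro add_mono; (rule ennreal_mult_le_mult_factor mult_right_mono)?; insert assms; simp)
  finally show ?thesis .
qed

lemma risk_le_oracle_bound_variance_underestimated:
  assumes "x \<in> E" "k0 \<le> kh" "\<not> sig \<le> 2 * sh"
  shows "risk (real kh) \<le> oracle_bound k0 p sh sig E x"
proof -
  have "bias (real kh) \<le> bias (real k0)"
    using assms(2) by (intro bias_antimono) simp
  with risk_le_crude[OF kh_le] have "risk (real kh) \<le> 2 * dev kn + 2 * dev_U + bias (real k0)"
    by (rule order_trans[OF _ add_left_mono])
  also have "\<dots> = 0 + 1 * bias (real k0) + 0 + 0 + 2 * dev_U + 0 + 2 * dev kn"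
    by (simp add: ac_simps)
  also have "\<dots> \<le> oracle_bound k0 p sh sig E x"
    unfolding oracle_bound_def
    by (intro add_mono; (rule ennreal_mult_le_mult_factor mult_right_mono)?; insert assms; simp)
  finally show ?thesis .
qed

lemma risk_le_oracle_bound_above:
  assumes "x \<in> E" "k0 \<le> kh" "sig \<le> 2 * sh"
  shows "risk (real kh) \<le> oracle_bound k0 p sh sig E x"
proof -
  define Mx where "Mx = Max ((\<lambda>k. dev (real k) - ennreal (sig / 4 * p k)) ` {1..nat \<lfloor>kn\<rfloor>})"
  have "4 * dev (real kh) \<le> 4 * (Mx + ennreal (sig / 4 * p kh))"
    unfolding Mx_def using kh by (intro mult_left_mono le_Max_minus_add) simp_all
  also have "\<dots> = 4 * Mx + ennreal (sig * p kh)"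
    using ennreal_mult'[of 4 "sig / 4 * p kh"] by (simp add: distrib_left)
  also have "\<dots> \<le> 4 * Mx + ennreal (2 * sh * p kh)"
    using assms(3) nonneg by (intro add_left_mono ennreal_leI mult_right_mono) simp_all
  finally have "4 * dev (real kh) \<le> 4 * Mx + ennreal (2 * sh * p kh)" .
  from risk_le_above[OF _ kh_le est_norm_finite(1) crit _ this] assms(2) nonneg
  have "risk (real kh) \<le> 4 * Mx + 12 * dev_U + 2 * bias (real k0) + ennreal (2 * sh * p k0)"
    by simp
  also have "\<dots> = 0 + 2 * bias (real k0) + ennreal (2 * sh * p k0) + 0 + 12 * dev_U + 4 * Mx + 0"
    by (simp add: ac_simps)
  also have "\<dots> \<le> oracle_bound k0 p sh sig E x"
    unfolding oracle_bound_def Mx_def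
    by (intro add_mono; (rule mult_right_mono)?; insert assms penalty_mono[of 2]; simp)
  finally show ?thesis .
qed

lemma risk_le_oracle_bound_below:
  assumes "x \<in> E" "kh \<le> k0"
  shows "risk (real kh) \<le> oracle_bound k0 p sh sig E x"
proof -
  from risk_le_below[OF _ k0_le est_norm_finite(2) crit] assms(2) nonneg
  have "risk (real kh) \<le> 4 * dev (real k0) + 4 * dev_U + bias (real k0) + 2 * ennreal (2 * sh * p k0)"
    by simp
  also have "\<dots> = 4 * dev (real k0) + 1 * bias (real k0) + ennreal (4 * sh * p k0) + 0
      + 4 * dev_U + 0 + 0"
    using ennreal_mult'[of 2 "2 * sh * p k0"] by (simp add: ac_simps)
  also have "\<dots> \<le> oracle_bound k0 p sh sig E x"
    unfolding oracle_bound_def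
    by (intro add_mono; (rule mult_right_mono)?; insert assms penalty_mono[of 4]; simp)
  finally show ?thesis .
qed

lemma oracle_inequality: "risk (real kh) \<le> oracle_bound k0 p sh sig E x"
proof -
  consider "x \<notin> E" | "x \<in> E" "k0 \<le> kh" "\<not> sig \<le> 2 * sh" | "x \<in> E" "k0 \<le> kh" "sig \<le> 2 * sh"
    | "x \<in> E" "kh \<le> k0"
    by linarith
  then show ?thesis
    by cases (simp_all add: risk_le_oracle_bound_off_event risk_le_oracle_bound_variance_underestimated
        risk_le_oracle_bound_above risk_le_oracle_bound_below)
qed

end

end

theorem mainTheorem4:
  fixes M :: "'a measure" and c :: real and n m :: nat
    and X U :: "'a \<Rightarrow> real" and f fU fY :: "real \<Rightarrow> real"
    and Ys Us :: "nat \<Rightarrow> 'a \<Rightarrow> real"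
    and MX :: "real \<Rightarrow> complex" and v :: "real \<Rightarrow> real"
    and kn :: real and Ev :: "'a set" and khat :: "'a \<Rightarrow> nat" and k0 :: nat
  assumes P: "prob_space M"
    and X_pos: "AE \<omega> in M. 0 < X \<omega>" and U_pos: "AE \<omega> in M. 0 < U \<omega>"
    and f_nn: "\<And>x. 0 \<le> f x" and fU_nn: "\<And>x. 0 \<le> fU x" and fY_nn: "\<And>x. 0 \<le> fY x"
    and X_distr: "distributed M lborel X (\<lambda>x. ennreal (f x))"
    and U_distr: "distributed M lborel U (\<lambda>x. ennreal (fU x))"
    and XU_indep: "prob_space.indep_var M borel X borel U"
    and f_L2: "set_integrable lborel {0<..} (\<lambda>x. x powr (2 * c - 1) * (f x)\<^sup>2)"
    and fU_L1: "set_integrable lborel {0<..} (\<lambda>x. x powr (c - 1) * fU x)"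
    and fU_L2: "set_integrable lborel {0<..} (\<lambda>x. x powr (2 * c - 1) * (fU x)\<^sup>2)"
    and Y_distr: "distributed M lborel (\<lambda>\<omega>. X \<omega> * U \<omega>) (\<lambda>x. ennreal (fY x))"
    and Y_mom: "integrable M (\<lambda>\<omega>. (X \<omega> * U \<omega>) powr (2 * (c - 1)))"
    and n_pos: "1 \<le> n" and m_pos: "1 \<le> m"
    and Ys_distr: "\<And>i. i < n \<Longrightarrow> distributed M lborel (Ys i) (\<lambda>x. ennreal (fY x))"
    and Us_distr: "\<And>j. j < m \<Longrightarrow> distributed M lborel (Us j) (\<lambda>x. ennreal (fU x))"
    and Ys_pos: "\<And>i. i < n \<Longrightarrow> AE \<omega> in M. 0 < Ys i \<omega>"
    and Us_pos: "\<And>j. j < m \<Longrightarrow> AE \<omega> in M. 0 < Us j \<omega>"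
    and sample_indep: "prob_space.indep_vars M (\<lambda>_. borel) (case_sum Ys Us) ({..<n} <+> {..<m})"
    and MX_def: "is_mellin_L2 c f MX"
    and v_meas: "v \<in> borel_measurable borel" and v_nn: "\<And>t. 0 \<le> v t"
    and v_Linf: "\<And>k. 0 < k \<Longrightarrow> esssup lborel (\<lambda>t. ereal (indicator {-k..k} t * v t)) < \<infinity>"
    and kn_ge: "1 \<le> kn"
    and Ev_event: "Ev \<in> sets M"
    and khat_argmin: "\<And>\<omega>. \<omega> \<in> space M \<Longrightarrow> khat \<omega> \<in> {1..nat \<lfloor>kn\<rfloor>} \<and>
        (\<forall>k\<in>{1..nat \<lfloor>kn\<rfloor>}.
           - enn2real (L2sq v (MXhatk c n m Ys Us (real (khat \<omega>)) \<omega>))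
             + 2 * sigmahat2 c n Ys \<omega> * pen n (vhat c n m Us v \<omega>) (real (khat \<omega>))
           \<le> - enn2real (L2sq v (MXhatk c n m Ys Us (real k) \<omega>))
             + 2 * sigmahat2 c n Ys \<omega> * pen n (vhat c n m Us v \<omega>) (real k))"
    and k0_range: "k0 \<in> {1..nat \<lfloor>kn\<rfloor>}"
  shows "AE \<omega> in M.
    L2sq v (\<lambda>t. MXhatk c n m Ys Us (real (khat \<omega>)) \<omega> t - MX t)
    \<le> 15 * L2sq v (\<lambda>t. indicator {- real k0..real k0} t
              * (emp_mellin c n Ys \<omega> t - mellin c fY t) * MUinv c n m Us \<omega> t)
     + 15 * L2sq v (\<lambda>t. indicator (- {- real k0..real k0}) t * MX t)
     + ennreal (24 * sigmahat2 c n Ys \<omega> * pen n (vhat c n m Us v \<omega>) (real k0)) * indicator Ev \<omega>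
     + 6 * L2sq v MX * indicator (- Ev) \<omega>
     + 15 * L2sq v (\<lambda>t. (mellin c fU t * MUinv c n m Us \<omega> t - 1) * MX t * indicator {-kn..kn} t)
     + 12 * Max ((\<lambda>k. L2sq v (\<lambda>t. indicator {- real k..real k} t
                     * (emp_mellin c n Ys \<omega> t - mellin c fY t) * MUinv c n m Us \<omega> t)
                   - ennreal ((1 + integral\<^sup>L M (\<lambda>\<omega>'. (X \<omega>' * U \<omega>') powr (2 * (c - 1)))) / 4
                              * pen n (vhat c n m Us v \<omega>) (real k)))
                 ` {1..nat \<lfloor>kn\<rfloor>})
     + 3 * L2sq v (\<lambda>t. indicator {-kn..kn} t
              * (emp_mellin c n Ys \<omega> t - mellin c fY t) * MUinv c n m Us \<omega> t)
         * (indicator (- Ev) \<omega>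
            + (if 1 + integral\<^sup>L M (\<lambda>\<omega>'. (X \<omega>' * U \<omega>') powr (2 * (c - 1))) \<le> 2 * sigmahat2 c n Ys \<omega>
               then 0 else 1))"
proof -
  interpret prob_space M by (rule P)
  have [measurable]: "fY \<in> borel_measurable borel" "fU \<in> borel_measurable borel"
    "MX \<in> borel_measurable borel"
    using density_measurable_of_distributed[OF Y_distr fY_nn]
      density_measurable_of_distributed[OF U_distr fU_nn] is_mellin_L2_measurable[OF MX_def] .
  have factor: "AE t in lborel. mellin c fY t = MX t * mellin c fU t"
    by (rule mellin_factorization[OF X_distr f_nn U_distr fU_nn Y_distr fY_nn XU_indep X_pos U_pos
          Y_mom MX_def])
  show ?thesis
    apply (rule AE_I2)
    subgoal for \<omega>
    proof -
      interpret oracle_setting v MX "emp_mellin c n Ys \<omega>" "mellin c fY" "mellin c fU" "MUinv c n m Us \<omega>" kn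
        using factor by unfold_locales (simp_all add: v_meas v_nn)
      have est_norm_eq: "est_norm (real k) = L2sq v (MXhatk c n m Ys Us (real k) \<omega>)" for k
        by (simp add: est_norm_def MXhatk_eq)
      have finite: "L2sq v (MXhatk c n m Ys Us (real k) \<omega>) < \<infinity>" if "k \<in> {1..nat \<lfloor>kn\<rfloor>}" for k
        using that by (intro L2sq_MXhatk_finite v_nn v_Linf) auto
      assume "\<omega> \<in> space M"
      note khat = khat_argmin[OF this]
      from oracle_inequality[unfolded est_norm_eq, OF conjunct1[OF khat] k0_range
          finite[OF conjunct1[OF khat]] finite[OF k0_range] bspec[OF conjunct2[OF khat] k0_range]
          sigmahat2_nonneg pen_vhat_nonneg[OF v_nn] pen_vhat_nonneg[OF v_nn]]
      show ?thesis
        unfolding oracle_bound_def risk_def dev_def bias_def dev_U_def MXhatk_eq .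
    qed
    done
qed

end
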